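(* Let $c\in(0,1)$, $f_{\mathrm{cost}}(x)=x^c$, and $F_{\mathrm{cost}}(p)=\sum_i f_{\mathrm{cost}}(p(i))$. For any finite set $S$ of $m$ discrete probability distributions, the greedy coupling $\mathcal G_S$ satisfies $F_{\mathrm{cost}}(\mathcal G_S)\le\left(\frac12+\frac{1}{c\,2^c}\right)F_{\mathrm{cost}}(C)$ for every coupling $C$ of $S$.
   Context: A coupling of $S=\{p_1,\dots,p_m\}$ is a joint distribution with marginals $p_1,\dots,p_m$; its cost is $F_{\mathrm{cost}}$ applied to its vector of probabilities. Greedy coupling algorithm: maintain the remaining masses of the states of each distribution in $S$. Repeatedly: let $r=\min_{p\in S}\max_j p(j)$; if $r=0$ stop; otherwise append $r$ as the next state of $\mathcal G_S$ and subtract $r$ from the largest remaining state of every distribution (ties broken arbitrarily). $\mathcal G_S$ is the resulting list of state masses. *)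

theory Defs
  imports Complex_Main
begin

definition is_dist :: "real list \<Rightarrow> bool" where
  "is_dist p \<longleftrightarrow> (\<forall>x\<in>set p. 0 \<le> x) \<and> sum_list p = 1"

definition tuples :: "real list list \<Rightarrow> nat list set" where
  "tuples S = {js. length js = length S \<and> (\<forall>k<length S. js ! k < length (S ! k))}"

definition coupling :: "real list list \<Rightarrow> (nat list \<Rightarrow> real) \<Rightarrow> bool" where
  "coupling S C \<longleftrightarrow> (\<forall>js\<in>tuples S. 0 \<le> C js) \<and>
     (\<forall>k<length S. \<forall>j<length (S ! k).
        (\<Sum>js\<in>{js\<in>tuples S. js ! k = j}. C js) = S ! k ! j)"

definition Fcost_list :: "real \<Rightarrow> real list \<Rightarrow> real" where
  "Fcost_list c xs = (\<Sum>x\<leftarrow>xs. x powr c)"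

definition Fcost_coupling :: "real \<Rightarrow> real list list \<Rightarrow> (nat list \<Rightarrow> real) \<Rightarrow> real" where
  "Fcost_coupling c S C = (\<Sum>js\<in>tuples S. C js powr c)"

definition greedy_r :: "real list list \<Rightarrow> real" where
  "greedy_r rs = Min ((\<lambda>q. Max (set q)) ` set rs)"

text \<open>greedy rs G: G is a possible output of the greedy coupling algorithm started with
  remaining masses rs, for some (arbitrary) tie-breaking.\<close>
inductive greedy :: "real list list \<Rightarrow> real list \<Rightarrow> bool" where
  stop: "greedy_r rs = 0 \<Longrightarrow> greedy rs []"
| step: "greedy_r rs \<noteq> 0 \<Longrightarrow> length js = length rs \<Longrightarrow>
    (\<forall>k<length rs. js ! k < length (rs ! k) \<and> rs ! k ! (js ! k) = Max (set (rs ! k))) \<Longrightarrow>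
    greedy (map (\<lambda>k. (rs ! k)[js ! k := rs ! k ! (js ! k) - greedy_r rs]) [0..<length rs]) G \<Longrightarrow>
    greedy rs (greedy_r rs # G)"

end

theory Submission
  imports Defs "HOL-Analysis.Analysis"
begin

(*
  For a threshold s > 0 let psi s y be y for y <= s, y/2 for s < y <= 2s, and s beyond 2s.
  Since psi s is subadditive, splitting every state of a marginal p into the masses that a
  coupling C assigns to it gives sum_j psi s (p j) <= sum psi s (C js).  Conversely, the total
  mass of the greedy states of size at most s is at most sum_j psi s (p j) for some marginal p:
  while the greedy value r exceeds s, lowering the largest state of each marginal by r does not
  increase sum psi s, and once r <= s, the marginal whose largest remaining state is r has all
  of its remaining mass, which equals the remaining greedy mass, in states of size at most s.
  Integrating both bounds against s^(c-2) ds over (0, 1] and multiplying by 1 - c turns the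
  greedy side into sum g^c - 1 and the coupling side into (1/2 + 1/(c 2^c)) sum C^c - 1.
*)

definition psi :: "real \<Rightarrow> real \<Rightarrow> real" where
  "psi s y = (if y \<le> s then y else if y \<le> 2 * s then y / 2 else s)"

lemma psi_nonneg: "0 \<le> s \<Longrightarrow> 0 \<le> y \<Longrightarrow> 0 \<le> psi s y"
  by (simp add: psi_def)

lemma psi_eq_self: "y \<le> s \<Longrightarrow> psi s y = y"
  by (simp add: psi_def)

lemma psi_zero: "0 \<le> s \<Longrightarrow> psi s 0 = 0"
  by (simp add: psi_def)

lemma psi_add_le: "0 \<le> s \<Longrightarrow> 0 \<le> a \<Longrightarrow> 0 \<le> b \<Longrightarrow> psi s (a + b) \<le> psi s a + psi s b"
  by (simp add: psi_def)

lemma psi_diff_le: "s < r \<Longrightarrow> r \<le> y \<Longrightarrow> psi s (y - r) \<le> psi s y"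
  by (simp add: psi_def)

lemma sum_list_list_update:
  fixes xs :: "'a::ab_group_add list"
  shows "k < length xs \<Longrightarrow> sum_list (xs[k := x]) = sum_list xs - xs ! k + x"
  by (induction xs arbitrary: k) (auto split: nat.split)

lemma sum_list_filter_le:
  fixes xs :: "'a::ordered_comm_monoid_add list"
  shows "(\<And>x. x \<in> set xs \<Longrightarrow> 0 \<le> x) \<Longrightarrow> sum_list (filter P xs) \<le> sum_list xs"
  by (induction xs) (auto intro: add_increasing add_left_mono)

lemma sum_list_divide_distrib: "(\<Sum>x\<leftarrow>xs. f x / (d::real)) = (\<Sum>x\<leftarrow>xs. f x) / d"
  by (induction xs) (simp_all add: add_divide_distrib)

lemma sum_list_filter_eq_sum_list_if: "sum_list (filter P xs) = (\<Sum>x\<leftarrow>xs. if P x then x else 0)"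
  by (induction xs) simp_all

lemma has_integral_powr_interval:
  fixes a b p :: real
  assumes "0 < a" "a \<le> b" "p \<noteq> -1"
  shows "((\<lambda>x. x powr p) has_integral (b powr (p + 1) - a powr (p + 1)) / (p + 1)) {a..b}"
proof -
  have "((\<lambda>x. x powr (p + 1) / (p + 1)) has_real_derivative x powr p) (at x)" if "x > 0" for x
    using DERIV_cdivide[OF has_real_derivative_powr[OF that, of "p + 1"], of "p + 1"] assms(3)
    by simp
  then have "((\<lambda>x. x powr p) has_integral (b powr (p + 1) / (p + 1) - a powr (p + 1) / (p + 1))) {a..b}"
    using assms(1) by (intro fundamental_theorem_of_calculus[OF assms(2)])
      (auto simp: has_real_derivative_iff_has_vector_derivative intro: has_vector_derivative_at_within)
  then show ?thesis by (simp add: diff_divide_distrib)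
qed

lemma has_integral_small_mass_powr:
  fixes c x :: real
  assumes "0 < c" "c < 1" "0 \<le> x" "x \<le> 1"
  shows "((\<lambda>s. (if x \<le> s then x else 0) * s powr (c - 2)) has_integral (x powr c - x) / (1 - c)) {0..1}"
proof (cases "x = 0")
  case True
  have "((\<lambda>s. (if x \<le> s then x else 0) * s powr (c - 2)) has_integral 0) {0..1}"
    using True by (intro has_integral_spike_finite[of "{}", OF _ _ has_integral_0]) auto
  with True show ?thesis by simp
next
  case False
  then have "0 < x" using assms(3) by simp
  have "x * ((1 - x powr (c - 1)) / (c - 1)) = (x powr c - x) / (1 - c)"
    using \<open>0 < x\<close> assms(2) by (simp add: powr_diff field_simps)
  then have "((\<lambda>s. x * s powr (c - 2)) has_integral (x powr c - x) / (1 - c)) {x..1}"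
    using has_integral_mult_right[OF has_integral_powr_interval[OF \<open>0 < x\<close> assms(4), of "c - 2"], of x]
      assms(2) by simp
  then have "((\<lambda>s. (if x \<le> s then x else 0) * s powr (c - 2)) has_integral (x powr c - x) / (1 - c)) {x..1}"
    by (rule has_integral_spike_finite[of "{}", rotated 2]) auto
  moreover have "((\<lambda>s. (if x \<le> s then x else 0) * s powr (c - 2)) has_integral 0) {0..x}"
    by (rule has_integral_spike_finite[of "{x}", OF _ _ has_integral_0]) auto
  ultimately show ?thesis
    using has_integral_combine[OF assms(3,4)] by fastforce
qed

lemma psi_powr_integral_pieces_eq:
  fixes c y :: real
  assumes "0 < c" "c < 1" "0 < y"
  shows "(y / 2) powr c / c + y / 2 * ((y powr (c - 1) - (y / 2) powr (c - 1)) / (c - 1))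
      + y * ((1 - y powr (c - 1)) / (c - 1)) = ((1 / 2 + 1 / (c * 2 powr c)) * y powr c - y) / (1 - c)"
proof -
  have "(y / 2) powr c = y powr c / 2 powr c" "y powr (c - 1) = y powr c / y"
    "(y / 2) powr (c - 1) = 2 * y powr c / (2 powr c * y)"
    using assms(3) by (simp_all add: powr_diff powr_divide)
  moreover have "Y / T / c + y / 2 * ((Y / y - 2 * Y / (T * y)) / (c - 1)) + y * ((1 - Y / y) / (c - 1))
      = ((1 / 2 + 1 / (c * T)) * Y - y) / (1 - c)" if "T \<noteq> 0" for Y T
  proof -
    have "c \<noteq> 0" "y \<noteq> 0" "c - 1 \<noteq> 0" "1 - c \<noteq> 0"
      using assms by auto
    then show ?thesis
      using that by (simp add: divide_simps) algebra
  qed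
  ultimately show ?thesis by simp
qed

lemma has_integral_psi_powr:
  fixes c y :: real
  assumes "0 < c" "c < 1" "0 \<le> y" "y \<le> 1"
  shows "((\<lambda>s. psi s y * s powr (c - 2)) has_integral
           ((1 / 2 + 1 / (c * 2 powr c)) * y powr c - y) / (1 - c)) {0..1}"
proof (cases "y = 0")
  case True
  have "((\<lambda>s. psi s y * s powr (c - 2)) has_integral 0) {0..1}"
    using True by (intro has_integral_spike_finite[of "{}", OF _ _ has_integral_0]) (auto simp: psi_def)
  with True show ?thesis by simp
next
  case False
  then have "0 < y" using assms(3) by simp
  have "((\<lambda>s. s powr (c - 1)) has_integral (y / 2) powr c / c) {0..y/2}"
    using has_integral_powr_from_0[of "c - 1" "y / 2"] assms(1) \<open>0 < y\<close> by simp
  then have "((\<lambda>s. psi s y * s powr (c - 2)) has_integral (y / 2) powr c / c) {0..y/2}"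
    by (rule has_integral_spike_finite[of "{0, y/2}", rotated 2]) (auto simp: psi_def powr_diff power2_eq_square)
  moreover have "((\<lambda>s. psi s y * s powr (c - 2)) has_integral
      y / 2 * ((y powr (c - 1) - (y / 2) powr (c - 1)) / (c - 1))) {y/2..y}"
    using has_integral_powr_interval[of "y / 2" y "c - 2"] assms(2) \<open>0 < y\<close>
    by (intro has_integral_spike_finite[of "{y}", OF _ _ has_integral_mult_right]) (auto simp: psi_def)
  moreover have "((\<lambda>s. psi s y * s powr (c - 2)) has_integral
      y * ((1 - y powr (c - 1)) / (c - 1))) {y..1}"
    using has_integral_powr_interval[of y 1 "c - 2"] assms \<open>0 < y\<close>
    by (intro has_integral_spike_finite[of "{}", OF _ _ has_integral_mult_right]) (auto simp: psi_def)
  ultimately have "((\<lambda>s. psi s y * s powr (c - 2)) has_integral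
      (y / 2) powr c / c + y / 2 * ((y powr (c - 1) - (y / 2) powr (c - 1)) / (c - 1))
      + y * ((1 - y powr (c - 1)) / (c - 1))) {0..1}"
    using \<open>0 < y\<close> assms(4)
    by (intro has_integral_combine[of 0 y 1] has_integral_combine[of 0 "y/2" y]) auto
  moreover note psi_powr_integral_pieces_eq[OF assms(1,2) \<open>0 < y\<close>]
  ultimately show ?thesis by simp
qed

lemma has_integral_sum_list:
  assumes "\<And>x. x \<in> set xs \<Longrightarrow> (f x has_integral I x) T"
  shows "((\<lambda>s. \<Sum>x\<leftarrow>xs. f x s) has_integral (\<Sum>x\<leftarrow>xs. I x)) T"
  using assms by (induction xs) (auto intro: has_integral_add)

lemma powr_sum_le_of_psi_domination:
  fixes c :: real and xs :: "real list" and y :: "'a \<Rightarrow> real"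
  assumes c: "0 < c" "c < 1"
    and xs: "\<forall>x\<in>set xs. 0 \<le> x" "sum_list xs = 1"
    and y: "finite A" "\<forall>a\<in>A. 0 \<le> y a" "sum y A = 1"
    and dom: "\<And>s. 0 < s \<Longrightarrow> s \<le> 1 \<Longrightarrow> sum_list (filter (\<lambda>x. x \<le> s) xs) \<le> (\<Sum>a\<in>A. psi s (y a))"
  shows "(\<Sum>x\<leftarrow>xs. x powr c) \<le> (1 / 2 + 1 / (c * 2 powr c)) * (\<Sum>a\<in>A. y a powr c)"
proof -
  let ?K = "1 / 2 + 1 / (c * 2 powr c)"
  have "((\<lambda>s. \<Sum>x\<leftarrow>xs. (if x \<le> s then x else 0) * s powr (c - 2)) has_integral
      (\<Sum>x\<leftarrow>xs. (x powr c - x) / (1 - c))) {0..1}"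
    using xs member_le_sum_list[of _ xs]
    by (intro has_integral_sum_list has_integral_small_mass_powr[OF c]) auto
  moreover have "((\<lambda>s. \<Sum>a\<in>A. psi s (y a) * s powr (c - 2)) has_integral
      (\<Sum>a\<in>A. (?K * y a powr c - y a) / (1 - c))) {0..1}"
    using y member_le_sum[of _ A y]
    by (intro has_integral_sum has_integral_psi_powr[OF c]) auto
  moreover have "(\<Sum>x\<leftarrow>xs. (if x \<le> s then x else 0) * s powr (c - 2))
      \<le> (\<Sum>a\<in>A. psi s (y a) * s powr (c - 2))" if "s \<in> {0..1}" for s
  proof (cases "s = 0")
    case False
    then have "sum_list (filter (\<lambda>x. x \<le> s) xs) * s powr (c - 2) \<le> (\<Sum>a\<in>A. psi s (y a)) * s powr (c - 2)"
      using that dom by (intro mult_right_mono) auto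
    then show ?thesis
      by (simp add: sum_list_filter_eq_sum_list_if sum_list_mult_const sum_distrib_right)
  qed simp \<comment> \<open>at \<open>s = 0\<close> both sides vanish because \<open>0 powr (c - 2) = 0\<close>\<close>
  ultimately have "(\<Sum>x\<leftarrow>xs. (x powr c - x) / (1 - c)) \<le> (\<Sum>a\<in>A. (?K * y a powr c - y a) / (1 - c))"
    by (rule has_integral_le)
  then have "((\<Sum>x\<leftarrow>xs. x powr c) - 1) / (1 - c) \<le> (?K * (\<Sum>a\<in>A. y a powr c) - 1) / (1 - c)"
    using xs(2) y(3)
    by (simp add: sum_list_divide_distrib sum_list_subtractf sum_divide_distrib[symmetric] sum_subtractf sum_distrib_left)
  then show ?thesis
    using c(2) by (simp add: divide_le_cancel)
qed

lemma tuples_eq_set_product_lists: "tuples S = set (product_lists (map (\<lambda>q. [0..<length q]) S))"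
  by (auto simp: tuples_def product_lists_set list_all2_conv_all_nth)

lemma finite_tuples: "finite (tuples S)"
  by (simp add: tuples_eq_set_product_lists)

lemma sum_tuples_group:
  assumes "k < length S"
  shows "(\<Sum>j<length (S ! k). \<Sum>js\<in>{js\<in>tuples S. js ! k = j}. f js) = (\<Sum>js\<in>tuples S. f js)"
  by (rule sum.group[OF finite_tuples finite_lessThan]) (use assms in \<open>auto simp: tuples_def\<close>)

lemma coupling_nonneg: "coupling S C \<Longrightarrow> js \<in> tuples S \<Longrightarrow> 0 \<le> C js"
  by (simp add: coupling_def)

lemma coupling_marginal:
  "coupling S C \<Longrightarrow> k < length S \<Longrightarrow> j < length (S ! k) \<Longrightarrow>
    (\<Sum>js\<in>{js\<in>tuples S. js ! k = j}. C js) = S ! k ! j"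
  by (simp add: coupling_def)

lemma coupling_sum_eq:
  assumes "coupling S C" "k < length S"
  shows "(\<Sum>js\<in>tuples S. C js) = sum_list (S ! k)"
proof -
  have "(\<Sum>js\<in>tuples S. C js) = (\<Sum>j<length (S ! k). \<Sum>js\<in>{js\<in>tuples S. js ! k = j}. C js)"
    by (rule sum_tuples_group[OF assms(2), symmetric])
  also have "\<dots> = (\<Sum>j<length (S ! k). S ! k ! j)"
    using coupling_marginal[OF assms] by simp
  finally show ?thesis
    by (simp add: sum_list_sum_nth atLeast0LessThan)
qed

lemma subadditive_sum_le:
  fixes h :: "real \<Rightarrow> real"
  assumes "h 0 = 0" "\<And>a b. 0 \<le> a \<Longrightarrow> 0 \<le> b \<Longrightarrow> h (a + b) \<le> h a + h b"
    and "finite A" "\<And>i. i \<in> A \<Longrightarrow> 0 \<le> f i"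
  shows "h (sum f A) \<le> (\<Sum>i\<in>A. h (f i))"
  using assms(3,4)
proof (induction A rule: finite_induct)
  case empty
  then show ?case using assms(1) by simp
next
  case (insert i A)
  then have "h (sum f (insert i A)) \<le> h (f i) + h (sum f A)"
    using assms(2) by (simp add: sum_nonneg)
  then show ?case using insert by simp
qed

lemma coupling_sum_list_le_subadditive:
  fixes h :: "real \<Rightarrow> real"
  assumes "coupling S C" "k < length S"
    and "h 0 = 0" "\<And>a b. 0 \<le> a \<Longrightarrow> 0 \<le> b \<Longrightarrow> h (a + b) \<le> h a + h b"
  shows "sum_list (map h (S ! k)) \<le> (\<Sum>js\<in>tuples S. h (C js))"
proof -
  have "sum_list (map h (S ! k)) = (\<Sum>j<length (S ! k). h (S ! k ! j))"
    by (simp add: sum_list_sum_nth atLeast0LessThan)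
  also have "\<dots> = (\<Sum>j<length (S ! k). h (\<Sum>js\<in>{js\<in>tuples S. js ! k = j}. C js))"
    using coupling_marginal[OF assms(1,2)] by simp
  also have "\<dots> \<le> (\<Sum>j<length (S ! k). \<Sum>js\<in>{js\<in>tuples S. js ! k = j}. h (C js))"
    by (intro sum_mono subadditive_sum_le[where h = h, OF assms(3,4)])
      (simp_all add: finite_tuples coupling_nonneg[OF assms(1)])
  also have "\<dots> = (\<Sum>js\<in>tuples S. h (C js))"
    by (rule sum_tuples_group[OF assms(2)])
  finally show ?thesis .
qed

definition greedy_step :: "real list list \<Rightarrow> nat list \<Rightarrow> real list list" where
  "greedy_step rs js = map (\<lambda>k. (rs ! k)[js ! k := rs ! k ! (js ! k) - greedy_r rs]) [0..<length rs]"

lemma length_greedy_step [simp]: "length (greedy_step rs js) = length rs"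
  by (simp add: greedy_step_def)

lemma nth_greedy_step:
  "k < length rs \<Longrightarrow> greedy_step rs js ! k = (rs ! k)[js ! k := rs ! k ! (js ! k) - greedy_r rs]"
  by (simp add: greedy_step_def)

definition equal_mass_rows :: "real list list \<Rightarrow> real \<Rightarrow> bool" where
  "equal_mass_rows rs \<sigma> \<longleftrightarrow>
     rs \<noteq> [] \<and> (\<forall>q\<in>set rs. q \<noteq> [] \<and> (\<forall>x\<in>set q. 0 \<le> x) \<and> sum_list q = \<sigma>)"

lemma greedy_r_le_Max: "q \<in> set rs \<Longrightarrow> greedy_r rs \<le> Max (set q)"
  by (simp add: greedy_r_def)

lemma greedy_r_attained:
  assumes "rs \<noteq> []"
  shows "\<exists>q\<in>set rs. Max (set q) = greedy_r rs"
proof -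
  have "greedy_r rs \<in> (\<lambda>q. Max (set q)) ` set rs"
    unfolding greedy_r_def using assms by (intro Min_in) auto
  then show ?thesis by auto
qed

lemma greedy_r_nonneg:
  assumes "equal_mass_rows rs \<sigma>"
  shows "0 \<le> greedy_r rs"
proof -
  obtain q where q: "q \<in> set rs" "Max (set q) = greedy_r rs"
    using assms greedy_r_attained[of rs] by (auto simp: equal_mass_rows_def)
  then have "q \<noteq> []" "\<forall>x\<in>set q. 0 \<le> x"
    using assms by (auto simp: equal_mass_rows_def)
  then have "0 \<le> Max (set q)"
    by (metis List.finite_set Max_ge list.set_intros(1) neq_Nil_conv order.trans)
  with q show ?thesis by simp
qed

lemma equal_mass_rows_greedy_step:
  assumes "equal_mass_rows rs \<sigma>"
    and "\<forall>k<length rs. js ! k < length (rs ! k) \<and> rs ! k ! (js ! k) = Max (set (rs ! k))"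
  shows "equal_mass_rows (greedy_step rs js) (\<sigma> - greedy_r rs)"
proof -
  have "q \<noteq> [] \<and> (\<forall>x\<in>set q. 0 \<le> x) \<and> sum_list q = \<sigma> - greedy_r rs"
    if q_in: "q \<in> set (greedy_step rs js)" for q
  proof -
    obtain k where k: "k < length rs" "q = greedy_step rs js ! k"
      using q_in by (auto simp: in_set_conv_nth)
    have j: "js ! k < length (rs ! k)" "rs ! k ! (js ! k) = Max (set (rs ! k))"
      using assms(2) k(1) by simp_all
    have q: "q = (rs ! k)[js ! k := Max (set (rs ! k)) - greedy_r rs]"
      using k j by (simp add: nth_greedy_step)
    have row: "rs ! k \<noteq> []" "\<forall>x\<in>set (rs ! k). 0 \<le> x" "sum_list (rs ! k) = \<sigma>"
      using assms(1) k(1) by (auto simp: equal_mass_rows_def)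
    have "greedy_r rs \<le> Max (set (rs ! k))"
      using k(1) by (simp add: greedy_r_le_Max)
    moreover have "set q \<subseteq> insert (Max (set (rs ! k)) - greedy_r rs) (set (rs ! k))"
      unfolding q by (rule set_update_subset_insert)
    ultimately have "\<forall>x\<in>set q. 0 \<le> x"
      using row(2) by auto
    moreover have "sum_list q = \<sigma> - greedy_r rs"
      using row(3) j unfolding q by (simp add: sum_list_list_update)
    ultimately show ?thesis
      using row(1) q by simp
  qed
  moreover have "greedy_step rs js \<noteq> []"
    using assms(1) by (simp add: equal_mass_rows_def greedy_step_def)
  ultimately show ?thesis
    by (simp add: equal_mass_rows_def)
qed

lemma equal_mass_rows_zero:
  assumes "equal_mass_rows rs \<sigma>" "greedy_r rs = 0"
  shows "\<sigma> = 0"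
proof -
  obtain q where q: "q \<in> set rs" "Max (set q) = 0"
    using assms greedy_r_attained[of rs] by (auto simp: equal_mass_rows_def)
  then have "\<forall>x\<in>set q. 0 \<le> x" "sum_list q = \<sigma>"
    using assms(1) by (auto simp: equal_mass_rows_def)
  moreover have "\<forall>x\<in>set q. x \<le> 0"
    using q(2) by (metis List.finite_set Max_ge)
  ultimately show ?thesis
    by (metis antisym sum_list_nonneg_eq_0_iff)
qed

lemma greedy_sum_list_nonneg:
  assumes "greedy rs G" "equal_mass_rows rs \<sigma>"
  shows "sum_list G = \<sigma> \<and> (\<forall>g\<in>set G. 0 \<le> g)"
  using assms
proof (induction arbitrary: \<sigma> rule: greedy.induct)
  case (stop rs)
  then show ?case by (simp add: equal_mass_rows_zero)
next
  case (step rs js G)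
  have "sum_list G = \<sigma> - greedy_r rs \<and> (\<forall>g\<in>set G. 0 \<le> g)"
    using step.IH equal_mass_rows_greedy_step[OF step.prems step.hyps(3)]
    by (simp add: greedy_step_def)
  then show ?case
    using greedy_r_nonneg[OF step.prems] by simp
qed

lemma sum_list_psi_greedy_step_le:
  assumes "s < greedy_r rs" "k < length rs"
    and "js ! k < length (rs ! k)" "rs ! k ! (js ! k) = Max (set (rs ! k))"
  shows "sum_list (map (psi s) (greedy_step rs js ! k)) \<le> sum_list (map (psi s) (rs ! k))"
proof -
  have "greedy_r rs \<le> rs ! k ! (js ! k)"
    using assms(2,4) by (simp add: greedy_r_le_Max)
  then have "psi s (rs ! k ! (js ! k) - greedy_r rs) \<le> psi s (rs ! k ! (js ! k))"
    by (rule psi_diff_le[OF assms(1)])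
  then show ?thesis
    using assms(2,3) by (simp add: nth_greedy_step map_update sum_list_list_update)
qed

lemma greedy_small_mass_le_psi:
  assumes "greedy rs G" "equal_mass_rows rs \<sigma>" "0 < s"
  shows "\<exists>q\<in>set rs. sum_list (filter (\<lambda>g. g \<le> s) G) \<le> sum_list (map (psi s) q)"
  using assms
proof (induction arbitrary: \<sigma> rule: greedy.induct)
  case (stop rs)
  have "hd rs \<in> set rs" "\<forall>x\<in>set (hd rs). 0 \<le> x"
    using stop.prems(1) by (auto simp: equal_mass_rows_def)
  then show ?case
    using \<open>0 < s\<close> by (auto intro!: bexI[of _ "hd rs"] sum_list_nonneg psi_nonneg)
next
  case (step rs js G)
  define r where "r = greedy_r rs"
  have rows': "equal_mass_rows (greedy_step rs js) (\<sigma> - r)"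
    unfolding r_def by (rule equal_mass_rows_greedy_step[OF step.prems(1) step.hyps(3)])
  show ?case
  proof (cases "r \<le> s")
    case True
    obtain q where q: "q \<in> set rs" "Max (set q) = r"
      using step.prems(1) greedy_r_attained[of rs] by (auto simp: equal_mass_rows_def r_def)
    then have "map (psi s) q = q"
      using True by (auto intro!: map_idI psi_eq_self dest: Max_ge[OF List.finite_set])
    then have "sum_list (map (psi s) q) = \<sigma>"
      using step.prems(1) q(1) by (simp add: equal_mass_rows_def)
    moreover have "sum_list G = \<sigma> - r" "\<forall>g\<in>set G. 0 \<le> g"
      using greedy_sum_list_nonneg[OF step.hyps(4)[folded greedy_step_def] rows'] by simp_all
    then have "sum_list (filter (\<lambda>g. g \<le> s) (r # G)) \<le> \<sigma>"
      using True sum_list_filter_le[of G "\<lambda>g. g \<le> s"] by simp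
    ultimately show ?thesis
      using q(1) by (auto simp: r_def)
  next
    case False
    obtain q' where q': "q' \<in> set (greedy_step rs js)"
      "sum_list (filter (\<lambda>g. g \<le> s) G) \<le> sum_list (map (psi s) q')"
      using step.IH[folded greedy_step_def, OF rows' step.prems(2)] by blast
    then obtain k where "k < length rs" "q' = greedy_step rs js ! k"
      by (auto simp: in_set_conv_nth)
    then have "sum_list (filter (\<lambda>g. g \<le> s) G) \<le> sum_list (map (psi s) (rs ! k))"
      using q'(2) sum_list_psi_greedy_step_le[of s rs k js] step.hyps(3) False by (simp add: r_def)
    then show ?thesis
      using \<open>k < length rs\<close> False by (auto simp: r_def intro!: bexI[of _ "rs ! k"])
  qed
qed

theorem theorem6:
  fixes c :: real and S :: "real list list" and C :: "nat list \<Rightarrow> real" and G :: "real list"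
  assumes "0 < c" and "c < 1"
    and "S \<noteq> []" and "\<forall>p\<in>set S. is_dist p"
    and "greedy S G"
    and "coupling S C"
  shows "Fcost_list c G \<le> (1/2 + 1 / (c * 2 powr c)) * Fcost_coupling c S C"
proof -
  have rows: "equal_mass_rows S 1"
    using assms(3,4) by (auto simp: equal_mass_rows_def is_dist_def)
  have G: "\<forall>g\<in>set G. 0 \<le> g" "sum_list G = 1"
    using greedy_sum_list_nonneg[OF assms(5) rows] by simp_all
  have C: "\<forall>js\<in>tuples S. 0 \<le> C js" "(\<Sum>js\<in>tuples S. C js) = 1"
    using coupling_nonneg[OF assms(6)] coupling_sum_eq[OF assms(6), of 0] assms(3,4)
    by (auto simp: is_dist_def)
  have "sum_list (filter (\<lambda>g. g \<le> s) G) \<le> (\<Sum>js\<in>tuples S. psi s (C js))"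
    if s: "0 < s" for s
  proof -
    obtain k where k: "k < length S"
      and greedy_le: "sum_list (filter (\<lambda>g. g \<le> s) G) \<le> sum_list (map (psi s) (S ! k))"
      using greedy_small_mass_le_psi[OF assms(5) rows s] by (auto simp: in_set_conv_nth)
    have "sum_list (map (psi s) (S ! k)) \<le> (\<Sum>js\<in>tuples S. psi s (C js))"
      using s by (intro coupling_sum_list_le_subadditive[OF assms(6) k]) (simp_all add: psi_zero psi_add_le)
    with greedy_le show ?thesis by linarith
  qed
  then show ?thesis
    unfolding Fcost_list_def Fcost_coupling_def
    using powr_sum_le_of_psi_domination[OF assms(1,2) G finite_tuples C] by simp
qed

end
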